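(* Let $p>2$ be an even integer. The $p$-frame potential $PFP_p(\mu)=\iint_{\mathbb{R}^d\times\mathbb{R}^d}|\langle x,y\rangle|^p\,d\mu(x)\,d\mu(y)$ is strongly differentiable at every $\mu\in P_p(\mathbb{R}^d)$, with gradient plan $(\iota,g^\mu_p)_\#\mu$, where $g^\mu_p(x):=2p\int_{\mathbb{R}^d}\langle x,u\rangle^{p-1}u\,d\mu(u)$.
   Context: $P_p(\mathbb{R}^d)$ is the set of Borel probability measures on $\mathbb{R}^d$ with finite $p$-th moment; $\iota$ is the identity map and $(\iota,g)_\#\mu$ the pushforward of $\mu$ under $x\mapsto(x,g(x))$. Let $q=p/(p-1)$. For $\gamma\in P(\mathbb{R}^d\times\mathbb{R}^d)$ and $\nu\in P_p(\mathbb{R}^d)$, $\Gamma(\gamma,\nu)$ denotes the set of probability measures $\beta$ on $(\mathbb{R}^d)^3$ with $(\pi^1,\pi^2)_\#\beta=\gamma$ and $\pi^3_\#\beta=\nu$, and for $\mu=\pi^1_\#\gamma$, $C_{p,\beta}(\mu,\nu)=\big(\iiint\|x_1-x_3\|^p\,d\beta\big)^{1/p}$. A functional $F:P_p(\mathbb{R}^d)\to\mathbb{R}$ is strongly differentiable at $\mu$ with gradient plan $\gamma$ (where $\pi^1_\#\gamma=\mu$ and $\iint\|x_2\|^q d\gamma<\infty$) if for every $\nu\in P_p(\mathbb{R}^d)$ and every $\beta\in\Gamma(\gamma,\nu)$, $F(\nu)-F(\mu)=\iiint\langle x_2,x_3-x_1\rangle\,d\beta(x_1,x_2,x_3)+R_\beta$,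 where $|R_\beta|\le\omega(C_{p,\beta}(\mu,\nu))$ for a function $\omega$ depending only on $\mu$ with $\omega(r)/r\to0$ as $r\to0$. *)

theory Defs
  imports "HOL-Probability.Probability"
begin

definition Pp :: "real \<Rightarrow> ('a::euclidean_space) measure set" where
  "Pp p = {\<mu>. prob_space \<mu> \<and> sets \<mu> = sets borel \<and>
              (\<integral>\<^sup>+ x. ennreal (norm x powr p) \<partial>\<mu>) < \<infinity>}"

definition borel_prob :: "('b::topological_space) measure \<Rightarrow> bool" where
  "borel_prob m \<longleftrightarrow> prob_space m \<and> sets m = sets borel"

definition Gamma_set :: "('a::euclidean_space \<times> 'a) measure \<Rightarrow> 'a measure
      \<Rightarrow> ('a \<times> 'a \<times> 'a) measure set" where
  "Gamma_set \<gamma> \<nu> = {\<beta>. borel_prob \<beta> \<and>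
       distr \<beta> borel (\<lambda>(x1, x2, x3). (x1, x2)) = \<gamma> \<and>
       distr \<beta> borel (\<lambda>(x1, x2, x3). x3) = \<nu>}"

definition Cpb :: "real \<Rightarrow> ('a::euclidean_space \<times> 'a \<times> 'a) measure \<Rightarrow> real" where
  "Cpb p \<beta> = enn2real (\<integral>\<^sup>+ z. ennreal (norm (fst z - snd (snd z)) powr p) \<partial>\<beta>) powr (1 / p)"

definition strongly_differentiable ::
  "real \<Rightarrow> ('a::euclidean_space measure \<Rightarrow> real) \<Rightarrow> 'a measure \<Rightarrow> ('a \<times> 'a) measure \<Rightarrow> bool" where
  "strongly_differentiable p F \<mu> \<gamma> \<longleftrightarrow>
     borel_prob \<gamma> \<and> distr \<gamma> borel fst = \<mu> \<and>
     (\<integral>\<^sup>+ z. ennreal (norm (snd z) powr (p / (p - 1))) \<partial>\<gamma>) < \<infinity> \<and>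
     (\<exists>\<omega> :: real \<Rightarrow> real. ((\<lambda>r. \<omega> r / r) \<longlongrightarrow> 0) (at_right 0) \<and>
        (\<forall>\<nu>\<in>Pp p. \<forall>\<beta>\<in>Gamma_set \<gamma> \<nu>.
           \<bar>F \<nu> - F \<mu> - (\<integral>z. (fst (snd z)) \<bullet> (snd (snd z) - fst z) \<partial>\<beta>)\<bar> \<le> \<omega> (Cpb p \<beta>)))"

definition PFP :: "nat \<Rightarrow> 'a::euclidean_space measure \<Rightarrow> real" where
  "PFP p \<mu> = (\<integral>x. (\<integral>y. \<bar>x \<bullet> y\<bar> ^ p \<partial>\<mu>) \<partial>\<mu>)"

definition gPFP :: "nat \<Rightarrow> 'a::euclidean_space measure \<Rightarrow> 'a \<Rightarrow> 'a" where
  "gPFP p \<mu> x = (2 * real p) *\<^sub>R (\<integral>u. ((x \<bullet> u) ^ (p - 1)) *\<^sub>R u \<partial>\<mu>)"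

end

theory Submission
  imports Defs
begin

text \<open>
  Let \<open>\<pi>\<close> be the \<open>(x\<^sub>1, x\<^sub>3)\<close>-marginal of \<open>\<beta>\<close>; since \<open>x\<^sub>2 = g\<^sub>p\<^sup>\<mu>(x\<^sub>1)\<close> almost surely, the first-order
  term only depends on \<open>\<pi>\<close>. For even \<open>p\<close>, \<open>PFP\<^sub>p \<nu>\<close> and \<open>PFP\<^sub>p \<mu>\<close> are the expectations of \<open>\<langle>x\<^sub>3, y\<^sub>3\<rangle>\<^sup>p\<close>
  and \<open>\<langle>x\<^sub>1, y\<^sub>1\<rangle>\<^sup>p\<close> for two independent draws \<open>(x\<^sub>1, x\<^sub>3)\<close>, \<open>(y\<^sub>1, y\<^sub>3)\<close> from \<open>\<pi>\<close>. Expanding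
  \<open>(x, y) \<mapsto> \<langle>x, y\<rangle>\<^sup>p\<close> to second order at \<open>(x\<^sub>1, y\<^sub>1)\<close>, the two first-order terms have the same
  expectation by symmetry, and together they give the pairing with \<open>g\<^sub>p\<^sup>\<mu>\<close>. The Taylor remainder is
  controlled by \<open>\<integral>|x\<^sub>3 - x\<^sub>1|\<^sup>2 (|x\<^sub>1| + |x\<^sub>3|)\<^sup>p\<^sup>-\<^sup>2 d\<pi>\<close> times a \<open>p\<close>-th moment, and Young's inequality
  bounds the former by \<open>C\<^sub>p\<^sub>,\<^sub>\<beta>\<^sup>2\<close> times moments, so the remainder is \<open>O(C\<^sub>p\<^sub>,\<^sub>\<beta>\<^sup>2)\<close>.
\<close>

lemma power_mult_le_power_add:
  fixes s t :: real
  assumes "0 \<le> s" "0 \<le> t" "j \<le> p"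
  shows "s ^ j * t ^ (p - j) \<le> s ^ p + t ^ p"
proof -
  have "s ^ j * t ^ (p - j) \<le> max s t ^ j * max s t ^ (p - j)"
    using assms by (intro mult_mono power_mono) auto
  also have "\<dots> = max s t ^ p"
    using assms by (simp flip: power_add)
  also have "\<dots> \<le> s ^ p + t ^ p"
    using assms by (cases "s \<le> t") (auto simp: max_def)
  finally show ?thesis .
qed

lemma power_add_le_two_power:
  fixes u v :: real
  assumes "0 \<le> u" "0 \<le> v"
  shows "(u + v) ^ p \<le> 2 ^ p * (u ^ p + v ^ p)"
proof -
  have "(u + v) ^ p \<le> (2 * max u v) ^ p"
    using assms by (intro power_mono) auto
  also have "\<dots> = 2 ^ p * max u v ^ p"
    by (simp add: power_mult_distrib)
  also have "\<dots> \<le> 2 ^ p * (u ^ p + v ^ p)"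
    using assms by (intro mult_left_mono) (auto simp: max_def)
  finally show ?thesis .
qed

lemma power_Taylor_remainder_le:
  fixes a b M :: real
  assumes "\<bar>a\<bar> \<le> M" "\<bar>b\<bar> \<le> M"
  shows "\<bar>b ^ Suc n - a ^ Suc n - real (Suc n) * a ^ n * (b - a)\<bar> \<le> real n ^ 2 * (b - a) ^ 2 * M ^ (n - 1)"
proof (induction n)
  case 0
  then show ?case by simp
next
  case (Suc n)
  have "0 \<le> M"
    using assms by linarith
  have "\<bar>a ^ n\<bar> \<le> M ^ n"
    unfolding power_abs using assms by (intro power_mono) auto
  have "b ^ Suc (Suc n) - a ^ Suc (Suc n) - real (Suc (Suc n)) * a ^ Suc n * (b - a)
      = b * (b ^ Suc n - a ^ Suc n - real (Suc n) * a ^ n * (b - a)) + real (Suc n) * a ^ n * (b - a) ^ 2"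
    by (simp add: algebra_simps power2_eq_square)
  then have "\<bar>b ^ Suc (Suc n) - a ^ Suc (Suc n) - real (Suc (Suc n)) * a ^ Suc n * (b - a)\<bar>
      \<le> \<bar>b\<bar> * \<bar>b ^ Suc n - a ^ Suc n - real (Suc n) * a ^ n * (b - a)\<bar> + real (Suc n) * \<bar>a ^ n\<bar> * (b - a) ^ 2"
    by (simp add: abs_mult abs_triangle_ineq[THEN order_trans])
  also have "\<dots> \<le> M * (real n ^ 2 * (b - a) ^ 2 * M ^ (n - 1)) + real (Suc n) * M ^ n * (b - a) ^ 2"
    using assms \<open>0 \<le> M\<close> \<open>\<bar>a ^ n\<bar> \<le> M ^ n\<close>
    by (intro add_mono mult_mono Suc mult_right_mono mult_left_mono) auto
  also have "\<dots> \<le> real (Suc n) ^ 2 * (b - a) ^ 2 * M ^ n"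
  proof (cases n)
    case (Suc m)
    have "real n ^ 2 + real n + 1 \<le> real (Suc n) ^ 2"
      by (simp add: power2_eq_square algebra_simps)
    then have "(real n ^ 2 + real n + 1) * ((b - a) ^ 2 * M ^ n) \<le> real (Suc n) ^ 2 * ((b - a) ^ 2 * M ^ n)"
      using \<open>0 \<le> M\<close> by (intro mult_right_mono) auto
    then show ?thesis
      using Suc by (simp add: algebra_simps)
  qed simp
  finally show ?case
    by simp
qed

lemma power_mult_square_add_split:
  fixes h k s t :: real
  assumes "2 \<le> p"
  shows "((h * t) ^ 2 + (s * k) ^ 2) * (s * t) ^ (p - 2)
    = h ^ 2 * s ^ (p - 2) * t ^ p + s ^ p * (k ^ 2 * t ^ (p - 2))"
proof -
  have "s ^ p = s ^ 2 * s ^ (p - 2)" "t ^ p = t ^ 2 * t ^ (p - 2)"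
    using assms by (metis le_add_diff_inverse power_add)+
  then show ?thesis
    by (simp add: power_mult_distrib algebra_simps)
qed

lemma inner_diff_square_le:
  fixes x x' y y' :: "'a::real_inner"
  shows "(x' \<bullet> y' - x \<bullet> y) ^ 2
    \<le> 2 * ((norm (x' - x) * (norm y + norm y')) ^ 2 + ((norm x + norm x') * norm (y' - y)) ^ 2)"
proof -
  define \<alpha> \<gamma> where "\<alpha> = norm (x' - x) * (norm y + norm y')" and "\<gamma> = (norm x + norm x') * norm (y' - y)"
  have "x' \<bullet> y' - x \<bullet> y = (x' - x) \<bullet> y' + x \<bullet> (y' - y)"
    by (simp add: inner_simps)
  moreover have "\<bar>(x' - x) \<bullet> y'\<bar> \<le> \<alpha>"
    unfolding \<alpha>_def using Cauchy_Schwarz_ineq2[of "x' - x" y'] by (smt (verit) mult_left_mono norm_ge_zero)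
  moreover have "\<bar>x \<bullet> (y' - y)\<bar> \<le> \<gamma>"
    unfolding \<gamma>_def using Cauchy_Schwarz_ineq2[of x "y' - y"] by (smt (verit) mult_right_mono norm_ge_zero)
  ultimately have "\<bar>x' \<bullet> y' - x \<bullet> y\<bar> \<le> \<alpha> + \<gamma>"
    by linarith
  then have "(x' \<bullet> y' - x \<bullet> y) ^ 2 \<le> (\<alpha> + \<gamma>) ^ 2"
    by (metis abs_ge_zero power2_abs power_mono)
  also have "\<dots> \<le> 2 * (\<alpha> ^ 2 + \<gamma> ^ 2)"
    using sum_squares_bound[of \<alpha> \<gamma>] by (simp add: power2_sum)
  finally show ?thesis
    unfolding \<alpha>_def \<gamma>_def .
qed

lemma inner_power_Taylor_remainder_le:
  fixes x x' y y' :: "'a::real_inner"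
  assumes "2 \<le> p"
  shows "\<bar>(x' \<bullet> y') ^ p - (x \<bullet> y) ^ p - real p * (x \<bullet> y) ^ (p - 1) * (y \<bullet> (x' - x))
            - real p * (x \<bullet> y) ^ (p - 1) * (x \<bullet> (y' - y))\<bar>
     \<le> 3 * real p ^ 2 * (norm (x' - x) ^ 2 * (norm x + norm x') ^ (p - 2) * (norm y + norm y') ^ p
                          + (norm x + norm x') ^ p * (norm (y' - y) ^ 2 * (norm y + norm y') ^ (p - 2)))"
proof -
  define a b h k where "a = x \<bullet> y" and "b = x' \<bullet> y'" and "h = x' - x" and "k = y' - y"
  define M \<alpha> \<gamma> where "M = (norm x + norm x') * (norm y + norm y')"
    and "\<alpha> = norm h * (norm y + norm y')" and "\<gamma> = (norm x + norm x') * norm k"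
  define E where "E = (\<alpha> ^ 2 + \<gamma> ^ 2) * M ^ (p - 2)"
  have "0 \<le> M" "0 \<le> \<alpha>" "0 \<le> \<gamma>"
    unfolding M_def \<alpha>_def \<gamma>_def by auto
  have bound: "\<bar>u \<bullet> v\<bar> \<le> M" if "norm u \<le> norm x + norm x'" "norm v \<le> norm y + norm y'" for u v
    using Cauchy_Schwarz_ineq2[of u v] that unfolding M_def by (smt (verit) mult_mono norm_ge_zero)
  have "\<bar>a\<bar> \<le> M" "\<bar>b\<bar> \<le> M"
    unfolding a_def b_def by (auto intro!: bound)
  have "(b - a) ^ 2 \<le> 2 * (\<alpha> ^ 2 + \<gamma> ^ 2)"
    unfolding a_def b_def \<alpha>_def \<gamma>_def h_def k_def by (rule inner_diff_square_le)
  obtain n where n: "p = Suc (Suc n)"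
    using assms by (metis add_2_eq_Suc le_Suc_ex)
  have "\<bar>b ^ p - a ^ p - real p * a ^ (p - 1) * (b - a)\<bar> \<le> real (Suc n) ^ 2 * (b - a) ^ 2 * M ^ n"
    using power_Taylor_remainder_le[OF \<open>\<bar>a\<bar> \<le> M\<close> \<open>\<bar>b\<bar> \<le> M\<close>, of "Suc n"] n by simp
  also have "\<dots> \<le> real p ^ 2 * (2 * (\<alpha> ^ 2 + \<gamma> ^ 2)) * M ^ (p - 2)"
    using n \<open>0 \<le> M\<close> \<open>(b - a) ^ 2 \<le> 2 * (\<alpha> ^ 2 + \<gamma> ^ 2)\<close> by (intro mult_mono) auto
  finally have Taylor: "\<bar>b ^ p - a ^ p - real p * a ^ (p - 1) * (b - a)\<bar> \<le> 2 * real p ^ 2 * E"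
    unfolding E_def by (simp add: algebra_simps)
  have "\<bar>real p * a ^ (p - 1) * (h \<bullet> k)\<bar> \<le> real p * M ^ (p - 1) * (norm h * norm k)"
    unfolding abs_mult power_abs using \<open>\<bar>a\<bar> \<le> M\<close> \<open>0 \<le> M\<close>
    by (intro mult_mono power_mono Cauchy_Schwarz_ineq2) auto
  also have "\<dots> = real p * (\<alpha> * \<gamma>) * M ^ (p - 2)"
    unfolding M_def \<alpha>_def \<gamma>_def n by (simp add: algebra_simps)
  also have "\<dots> \<le> real p ^ 2 * E"
  proof -
    have "real p \<le> real p ^ 2"
      using assms by (simp add: power2_eq_square)
    then have "real p * (\<alpha> * \<gamma>) \<le> real p ^ 2 * (\<alpha> ^ 2 + \<gamma> ^ 2)"
      using sum_squares_bound[of \<alpha> \<gamma>] mult_nonneg_nonneg[OF \<open>0 \<le> \<alpha>\<close> \<open>0 \<le> \<gamma>\<close>] by (intro mult_mono) auto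
    then show ?thesis
      unfolding E_def using \<open>0 \<le> M\<close> by (simp add: mult.assoc[symmetric] mult_right_mono)
  qed
  finally have cross: "\<bar>real p * a ^ (p - 1) * (h \<bullet> k)\<bar> \<le> real p ^ 2 * E" .
  have "b ^ p - a ^ p - real p * a ^ (p - 1) * (y \<bullet> h) - real p * a ^ (p - 1) * (x \<bullet> k)
      = (b ^ p - a ^ p - real p * a ^ (p - 1) * (b - a)) + real p * a ^ (p - 1) * (h \<bullet> k)"
    unfolding a_def b_def h_def k_def by (simp add: inner_diff_left inner_diff_right inner_commute algebra_simps)
  then have "\<bar>b ^ p - a ^ p - real p * a ^ (p - 1) * (y \<bullet> h) - real p * a ^ (p - 1) * (x \<bullet> k)\<bar> \<le> 3 * real p ^ 2 * E"
    using Taylor cross by linarith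
  then show ?thesis
    unfolding E_def M_def \<alpha>_def \<gamma>_def power_mult_square_add_split[OF assms]
    unfolding a_def b_def h_def k_def .
qed

lemma abs_inner_power_le:
  fixes u v :: "'a::real_inner"
  assumes "norm u * norm v \<le> m"
  shows "\<bar>(u \<bullet> v) ^ n\<bar> \<le> m ^ n"
  unfolding power_abs using Cauchy_Schwarz_ineq2[of u v] assms by (intro power_mono) auto

lemma abs_inner_power_mult_inner_le:
  fixes u v w z :: "'a::real_inner"
  assumes "norm u * norm v \<le> m" "norm w * norm z \<le> m" "0 < n"
  shows "\<bar>(u \<bullet> v) ^ (n - 1) * (w \<bullet> z)\<bar> \<le> m ^ n"
proof -
  have "\<bar>(u \<bullet> v) ^ (n - 1) * (w \<bullet> z)\<bar> \<le> m ^ (n - 1) * m"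
    unfolding abs_mult using abs_inner_power_le[OF assms(1)] Cauchy_Schwarz_ineq2[of w z] assms(2)
    by (intro mult_mono) auto
  also have "\<dots> = m ^ n"
    using assms(3) by (simp add: power_Suc2[symmetric])
  finally show ?thesis .
qed

lemma borel_measurable_continuous_on_sets:
  assumes "sets M = sets (borel :: 'b::topological_space measure)"
    and "continuous_on UNIV (f :: 'b \<Rightarrow> 'c::topological_space)"
  shows "f \<in> borel_measurable M"
  using borel_measurable_continuous_onI[OF assms(2)] by (simp add: measurable_cong_sets[OF assms(1) refl])

lemma sets_pair_measure_borel:
  assumes "sets M = sets (borel :: 'b::second_countable_topology measure)"
    and "sets N = sets (borel :: 'c::second_countable_topology measure)"
  shows "sets (M \<Otimes>\<^sub>M N) = sets (borel :: ('b \<times> 'c) measure)"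
proof -
  have "sets (M \<Otimes>\<^sub>M N) = sets (borel \<Otimes>\<^sub>M borel :: ('b \<times> 'c) measure)"
    by (rule sets_pair_measure_cong[OF assms])
  also have "(borel \<Otimes>\<^sub>M borel :: ('b \<times> 'c) measure) = borel"
    by (rule borel_prod)
  finally show ?thesis .
qed

lemma pair_prob_space_square: "prob_space M \<Longrightarrow> pair_prob_space M M"
  by (simp add: pair_prob_space_def pair_sigma_finite_def prob_space_imp_sigma_finite)

lemma
  fixes U V :: "'b \<Rightarrow> real"
  assumes "prob_space M" "integrable M U" "integrable M V"
  shows integrable_mult_fst_snd: "integrable (M \<Otimes>\<^sub>M M) (\<lambda>q. U (fst q) * V (snd q))"
    and integral_mult_fst_snd: "(\<integral>q. U (fst q) * V (snd q) \<partial>(M \<Otimes>\<^sub>M M)) = integral\<^sup>L M U * integral\<^sup>L M V"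
proof -
  interpret pair_prob_space M M
    using pair_prob_space_square[OF assms(1)] .
  have [measurable]: "U \<in> borel_measurable M" "V \<in> borel_measurable M"
    using assms by auto
  show integrable: "integrable (M \<Otimes>\<^sub>M M) (\<lambda>q. U (fst q) * V (snd q))"
  proof (rule Fubini_integrable)
    have "integrable M (\<lambda>x. \<bar>U x\<bar> * (\<integral>y. \<bar>V y\<bar> \<partial>M))"
      using assms by (intro integrable_mult_left integrable_abs)
    then show "integrable M (\<lambda>x. \<integral>y. norm (U (fst (x, y)) * V (snd (x, y))) \<partial>M)"
      by (simp add: abs_mult)
    show "AE x in M. integrable M (\<lambda>y. U (fst (x, y)) * V (snd (x, y)))"
      using assms by (auto intro!: integrable_mult_right)
  qed measurable
  show "(\<integral>q. U (fst q) * V (snd q) \<partial>(M \<Otimes>\<^sub>M M)) = integral\<^sup>L M U * integral\<^sup>L M V"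
    using integral_fst'[OF integrable] by simp
qed

lemma Pp_integrable_norm_power:
  assumes "M \<in> Pp (real p)" "0 < p"
  shows "integrable M (\<lambda>x. norm x ^ p)"
proof (rule integrableI_bounded)
  show "(\<lambda>x. norm x ^ p) \<in> borel_measurable M"
    using assms unfolding Pp_def
    by (auto intro!: borel_measurable_continuous_on_sets continuous_intros)
  show "(\<integral>\<^sup>+ x. ennreal (norm (norm x ^ p)) \<partial>M) < \<infinity>"
    using assms unfolding Pp_def by (simp add: powr_realpow')
qed

lemma PFP_distr:
  fixes T :: "'b \<Rightarrow> 'a::euclidean_space"
  assumes "prob_space M" and [measurable]: "T \<in> borel_measurable M" and "even p"
    and "integrable (M \<Otimes>\<^sub>M M) (\<lambda>q. (T (fst q) \<bullet> T (snd q)) ^ p)"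
  shows "PFP p (distr M borel T) = (\<integral>q. (T (fst q) \<bullet> T (snd q)) ^ p \<partial>(M \<Otimes>\<^sub>M M))"
proof -
  interpret pair_prob_space M M
    using pair_prob_space_square[OF assms(1)] .
  have inner: "(\<integral>y. \<bar>x \<bullet> y\<bar> ^ p \<partial>distr M borel T) = (\<integral>w. (x \<bullet> T w) ^ p \<partial>M)" for x
    using \<open>even p\<close> by (subst integral_distr) (auto simp: power_even_abs)
  have "PFP p (distr M borel T) = (\<integral>x. (\<integral>w. (x \<bullet> T w) ^ p \<partial>M) \<partial>distr M borel T)"
    unfolding PFP_def inner ..
  also have "\<dots> = (\<integral>z. (\<integral>w. (T z \<bullet> T w) ^ p \<partial>M) \<partial>M)"
    by (rule integral_distr)
      (simp_all add: sigma_finite_measure.borel_measurable_lebesgue_integral[OF prob_space_imp_sigma_finite[OF assms(1)]])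
  also have "\<dots> = (\<integral>q. (T (fst q) \<bullet> T (snd q)) ^ p \<partial>(M \<Otimes>\<^sub>M M))"
    using integral_fst'[OF assms(4)] by simp
  finally show ?thesis .
qed

section \<open>The gradient \<open>g\<^sub>p\<^sup>\<mu>\<close>\<close>

lemma norm_gPFP_integrand_le:
  fixes x u :: "'a::real_inner"
  assumes "0 < p"
  shows "norm ((x \<bullet> u) ^ (p - 1) *\<^sub>R u) \<le> norm x ^ (p - 1) * norm u ^ p"
proof -
  have "norm ((x \<bullet> u) ^ (p - 1) *\<^sub>R u) = \<bar>x \<bullet> u\<bar> ^ (p - 1) * norm u"
    by (simp add: power_abs)
  also have "\<dots> \<le> (norm x * norm u) ^ (p - 1) * norm u"
    by (intro mult_right_mono power_mono Cauchy_Schwarz_ineq2) auto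
  also have "\<dots> = norm x ^ (p - 1) * norm u ^ p"
    using assms by (cases p) (auto simp: power_mult_distrib)
  finally show ?thesis .
qed

context
  fixes p :: nat and \<mu> :: "'a::euclidean_space measure"
  assumes sets_\<mu>: "sets \<mu> = sets borel" and moment_\<mu>: "integrable \<mu> (\<lambda>u. norm u ^ p)" and "0 < p"
begin

lemma integrable_gPFP_integrand: "integrable \<mu> (\<lambda>u. (x \<bullet> u) ^ (p - 1) *\<^sub>R u)"
proof (rule Bochner_Integration.integrable_bound)
  show "integrable \<mu> (\<lambda>u. norm x ^ (p - 1) * norm u ^ p)"
    using moment_\<mu> by auto
  show "(\<lambda>u. (x \<bullet> u) ^ (p - 1) *\<^sub>R u) \<in> borel_measurable \<mu>"
    using sets_\<mu> by (intro borel_measurable_continuous_on_sets continuous_intros)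
  show "AE u in \<mu>. norm ((x \<bullet> u) ^ (p - 1) *\<^sub>R u) \<le> norm (norm x ^ (p - 1) * norm u ^ p)"
    using norm_gPFP_integrand_le[OF \<open>0 < p\<close>] by auto
qed

lemma norm_gPFP_le: "norm (gPFP p \<mu> x) \<le> 2 * real p * norm x ^ (p - 1) * (\<integral>u. norm u ^ p \<partial>\<mu>)"
proof -
  have "norm (\<integral>u. (x \<bullet> u) ^ (p - 1) *\<^sub>R u \<partial>\<mu>) \<le> (\<integral>u. norm ((x \<bullet> u) ^ (p - 1) *\<^sub>R u) \<partial>\<mu>)"
    by (rule integral_norm_bound)
  also have "\<dots> \<le> (\<integral>u. norm x ^ (p - 1) * norm u ^ p \<partial>\<mu>)"
    using moment_\<mu> norm_gPFP_integrand_le[OF \<open>0 < p\<close>]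
    by (intro integral_mono[OF integrable_norm[OF integrable_gPFP_integrand]]) auto
  finally show ?thesis
    unfolding gPFP_def by (simp add: mult.assoc mult_left_mono)
qed

lemma inner_gPFP: "gPFP p \<mu> x \<bullet> v = 2 * real p * (\<integral>u. (x \<bullet> u) ^ (p - 1) * (u \<bullet> v) \<partial>\<mu>)"
  unfolding gPFP_def
  using integral_inner_left[of v \<mu> "\<lambda>u. (x \<bullet> u) ^ (p - 1) *\<^sub>R u", OF integrable_gPFP_integrand]
  by simp

end

lemma borel_measurable_gPFP [measurable]:
  fixes \<mu> :: "'a::euclidean_space measure"
  assumes "prob_space \<mu>" "sets \<mu> = sets borel"
  shows "gPFP p \<mu> \<in> borel_measurable borel"
proof -
  interpret prob_space \<mu> by fact
  have "(\<lambda>x. \<integral>u. (x \<bullet> u) ^ (p - 1) *\<^sub>R u \<partial>\<mu>) \<in> borel_measurable borel"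
    by (rule borel_measurable_lebesgue_integral, rule borel_measurable_continuous_on_sets)
       (auto simp: sets_pair_measure_borel[OF refl assms(2)] case_prod_beta intro!: continuous_intros)
  then show ?thesis
    unfolding gPFP_def by measurable
qed

text \<open>The exponent \<open>q = p/(p-1)\<close> is exactly the one turning the growth \<open>|x|\<^sup>p\<^sup>-\<^sup>1\<close> of \<open>g\<^sub>p\<^sup>\<mu>\<close> into \<open>|x|\<^sup>p\<close>.\<close>
lemma gPFP_dual_moment_finite:
  assumes "\<mu> \<in> Pp (real p)" "1 < p"
  shows "(\<integral>\<^sup>+ x. ennreal (norm (gPFP p \<mu> x) powr (real p / (real p - 1))) \<partial>\<mu>) < \<infinity>"
proof -
  define q where "q = real p / (real p - 1)"
  define C where "C = (2 * real p * (\<integral>u. norm u ^ p \<partial>\<mu>)) powr q"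
  have \<mu>: "sets \<mu> = sets borel" "(\<integral>\<^sup>+ x. ennreal (norm x powr real p) \<partial>\<mu>) < \<infinity>"
    using assms unfolding Pp_def by auto
  have moment: "integrable \<mu> (\<lambda>u. norm u ^ p)"
    using assms by (intro Pp_integrable_norm_power) auto
  have "0 < q" "real (p - 1) * q = real p"
    unfolding q_def using assms by (auto simp: of_nat_diff)
  have pointwise: "norm (gPFP p \<mu> x) powr q \<le> C * norm x powr real p" for x
  proof -
    have "norm (gPFP p \<mu> x) powr q \<le> (2 * real p * (\<integral>u. norm u ^ p \<partial>\<mu>) * norm x ^ (p - 1)) powr q"
      using \<open>0 < q\<close> norm_gPFP_le[OF \<mu>(1) moment, of x] assms by (intro powr_mono2) (auto simp: mult_ac)
    also have "\<dots> = C * (norm x ^ (p - 1)) powr q"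
      unfolding C_def by (simp add: powr_mult)
    also have "(norm x ^ (p - 1)) powr q = norm x powr real p"
    proof (cases "x = 0")
      case False
      then have "(norm x ^ (p - 1)) powr q = (norm x powr real (p - 1)) powr q"
        by (simp add: powr_realpow)
      also have "\<dots> = norm x powr real p"
        unfolding powr_powr \<open>real (p - 1) * q = real p\<close> ..
      finally show ?thesis .
    qed (use \<open>0 < q\<close> assms in simp)
    finally show ?thesis .
  qed
  have "(\<integral>\<^sup>+ x. ennreal (norm (gPFP p \<mu> x) powr q) \<partial>\<mu>) \<le> (\<integral>\<^sup>+ x. ennreal C * ennreal (norm x powr real p) \<partial>\<mu>)"
    using pointwise by (intro nn_integral_mono) (auto simp: C_def simp flip: ennreal_mult)
  also have "\<dots> = ennreal C * (\<integral>\<^sup>+ x. ennreal (norm x powr real p) \<partial>\<mu>)"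
    using \<mu>(1) by (intro nn_integral_cmult) (simp add: measurable_cong_sets[OF \<mu>(1) refl])
  also have "\<dots> < \<infinity>"
    using \<mu>(2) by (simp add: ennreal_mult_less_top)
  finally show ?thesis
    unfolding q_def .
qed

lemma graph_plan_gPFP:
  assumes "\<mu> \<in> Pp (real p)" "1 < p"
  defines "\<gamma> \<equiv> distr \<mu> borel (\<lambda>x. (x, gPFP p \<mu> x))"
  shows "borel_prob \<gamma>" "distr \<gamma> borel fst = \<mu>"
    and "(\<integral>\<^sup>+ z. ennreal (norm (snd z) powr (real p / (real p - 1))) \<partial>\<gamma>) < \<infinity>"
proof -
  have \<mu>: "prob_space \<mu>" "sets \<mu> = sets borel"
    using assms unfolding Pp_def by auto
  note borel_measurable_gPFP[OF \<mu>, measurable]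
  have graph[measurable]: "(\<lambda>x. (x, gPFP p \<mu> x)) \<in> measurable \<mu> borel"
    unfolding measurable_cong_sets[OF \<mu>(2) refl] by measurable
  show "borel_prob \<gamma>"
    unfolding borel_prob_def \<gamma>_def using prob_space.prob_space_distr[OF \<mu>(1) graph] by simp
  have "distr \<gamma> borel fst = distr \<mu> borel (fst \<circ> (\<lambda>x. (x, gPFP p \<mu> x)))"
    unfolding \<gamma>_def
    by (rule distr_distr[OF _ graph]) (intro borel_measurable_continuous_onI continuous_intros)
  then show "distr \<gamma> borel fst = \<mu>"
    by (simp add: comp_def distr_id2[OF \<mu>(2)[symmetric]])
  have [measurable]: "snd \<in> borel_measurable (borel :: ('a \<times> 'a) measure)"
    by (intro borel_measurable_continuous_onI continuous_intros)
  show "(\<integral>\<^sup>+ z. ennreal (norm (snd z) powr (real p / (real p - 1))) \<partial>\<gamma>) < \<infinity>"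
    unfolding \<gamma>_def using gPFP_dual_moment_finite[OF assms(1,2)]
    by (subst nn_integral_distr[OF graph]) (simp_all, measurable)
qed

section \<open>First-order expansion along a coupling\<close>

text \<open>This is \<open>6p\<^sup>2 r\<^sup>2 (1 + E) E\<close> with \<open>r = C\<^sub>p\<^sub>,\<^sub>\<beta>\<close> and \<open>E = \<integral>(|x\<^sub>1| + |x\<^sub>3|)\<^sup>p \<le> 4\<^sup>p m + 2\<^sup>p r\<^sup>p\<close>,
  where \<open>m\<close> is the \<open>p\<close>-th moment of \<open>\<mu>\<close>.\<close>
definition PFP_modulus :: "nat \<Rightarrow> real \<Rightarrow> real \<Rightarrow> real" where
  "PFP_modulus p m r = 6 * real p ^ 2 * r ^ 2 * (1 + 4 ^ p * m + 2 ^ p * r ^ p) * (4 ^ p * m + 2 ^ p * r ^ p)"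

lemma PFP_modulus_tendsto: "((\<lambda>r. PFP_modulus p m r / r) \<longlongrightarrow> 0) (at_right 0)"
proof -
  have "((\<lambda>r. 6 * real p ^ 2 * r * (1 + 4 ^ p * m + 2 ^ p * r ^ p) * (4 ^ p * m + 2 ^ p * r ^ p))
      \<longlongrightarrow> 6 * real p ^ 2 * 0 * (1 + 4 ^ p * m + 2 ^ p * 0 ^ p) * (4 ^ p * m + 2 ^ p * 0 ^ p)) (at_right 0)"
    by (intro tendsto_intros)
  moreover have "\<forall>\<^sub>F r in at_right 0.
      6 * real p ^ 2 * r * (1 + 4 ^ p * m + 2 ^ p * r ^ p) * (4 ^ p * m + 2 ^ p * r ^ p) = PFP_modulus p m r / r"
    using eventually_at_right_less[of "0::real"]
    by eventually_elim (simp add: PFP_modulus_def power2_eq_square)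
  ultimately show ?thesis
    by (simp add: Lim_transform_eventually)
qed

context
  fixes p :: nat and \<pi> :: "('a::euclidean_space \<times> 'a) measure"
  assumes two_less_p: "2 < p" and prob_\<pi>: "prob_space \<pi>" and sets_\<pi>: "sets \<pi> = sets borel"
    and moment_fst: "integrable \<pi> (\<lambda>z. norm (fst z) ^ p)"
    and moment_snd: "integrable \<pi> (\<lambda>z. norm (snd z) ^ p)"
begin

lemma integrable_norm_add_power: "integrable \<pi> (\<lambda>z. (norm (fst z) + norm (snd z)) ^ p)"
proof (rule Bochner_Integration.integrable_bound)
  show "integrable \<pi> (\<lambda>z. 2 ^ p * (norm (fst z) ^ p + norm (snd z) ^ p))"
    using moment_fst moment_snd by auto
  show "(\<lambda>z. (norm (fst z) + norm (snd z)) ^ p) \<in> borel_measurable \<pi>"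
    using sets_\<pi> by (intro borel_measurable_continuous_on_sets continuous_intros)
  show "AE z in \<pi>. norm ((norm (fst z) + norm (snd z)) ^ p) \<le> norm (2 ^ p * (norm (fst z) ^ p + norm (snd z) ^ p))"
    using power_add_le_two_power by auto
qed

lemma integrable_norm_diff_power: "integrable \<pi> (\<lambda>z. norm (snd z - fst z) ^ p)"
proof (rule Bochner_Integration.integrable_bound[OF integrable_norm_add_power])
  show "(\<lambda>z. norm (snd z - fst z) ^ p) \<in> borel_measurable \<pi>"
    using sets_\<pi> by (intro borel_measurable_continuous_on_sets continuous_intros)
  show "AE z in \<pi>. norm (norm (snd z - fst z) ^ p) \<le> norm ((norm (fst z) + norm (snd z)) ^ p)"
  proof (intro AE_I2)
    fix z :: "'a \<times> 'a"
    show "norm (norm (snd z - fst z) ^ p) \<le> norm ((norm (fst z) + norm (snd z)) ^ p)"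
      using norm_triangle_ineq4[of "snd z" "fst z"] by (auto intro!: power_mono)
  qed
qed

lemma integrable_weighted_square_diff:
  "integrable \<pi> (\<lambda>z. norm (snd z - fst z) ^ 2 * (norm (fst z) + norm (snd z)) ^ (p - 2))"
proof (rule Bochner_Integration.integrable_bound[OF integrable_norm_add_power])
  show "(\<lambda>z. norm (snd z - fst z) ^ 2 * (norm (fst z) + norm (snd z)) ^ (p - 2)) \<in> borel_measurable \<pi>"
    using sets_\<pi> by (intro borel_measurable_continuous_on_sets continuous_intros)
  have "norm (snd z - fst z) ^ 2 * (norm (fst z) + norm (snd z)) ^ (p - 2)
      \<le> (norm (fst z) + norm (snd z)) ^ 2 * (norm (fst z) + norm (snd z)) ^ (p - 2)" for z
    using norm_triangle_ineq4[of "snd z" "fst z"] by (intro mult_right_mono power_mono) auto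
  also have "(norm (fst z) + norm (snd z)) ^ 2 * (norm (fst z) + norm (snd z)) ^ (p - 2)
      = (norm (fst z) + norm (snd z)) ^ p" for z :: "'a \<times> 'a"
    using two_less_p by (metis less_imp_le le_add_diff_inverse power_add)
  finally show "AE z in \<pi>. norm (norm (snd z - fst z) ^ 2 * (norm (fst z) + norm (snd z)) ^ (p - 2))
      \<le> norm ((norm (fst z) + norm (snd z)) ^ p)"
    by auto
qed

lemma integrable_pair_dominated:
  assumes "continuous_on UNIV f"
    and "\<And>x y. \<bar>f (x, y)\<bar> \<le> ((norm (fst x) + norm (snd x)) * (norm (fst y) + norm (snd y))) ^ p"
  shows "integrable (\<pi> \<Otimes>\<^sub>M \<pi>) f"
proof (rule Bochner_Integration.integrable_bound)
  show "integrable (\<pi> \<Otimes>\<^sub>M \<pi>)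
      (\<lambda>q. (norm (fst (fst q)) + norm (snd (fst q))) ^ p * (norm (fst (snd q)) + norm (snd (snd q))) ^ p)"
    by (rule integrable_mult_fst_snd[OF prob_\<pi> integrable_norm_add_power integrable_norm_add_power])
  show "f \<in> borel_measurable (\<pi> \<Otimes>\<^sub>M \<pi>)"
    using assms(1) by (rule borel_measurable_continuous_on_sets[OF sets_pair_measure_borel[OF sets_\<pi> sets_\<pi>]])
  show "AE q in \<pi> \<Otimes>\<^sub>M \<pi>. norm (f q)
      \<le> norm ((norm (fst (fst q)) + norm (snd (fst q))) ^ p * (norm (fst (snd q)) + norm (snd (snd q))) ^ p)"
    using assms(2) by (auto simp: power_mult_distrib)
qed

lemma integrable_inner_power_pair:
  "integrable (\<pi> \<Otimes>\<^sub>M \<pi>) (\<lambda>q. (snd (fst q) \<bullet> snd (snd q)) ^ p)"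
  "integrable (\<pi> \<Otimes>\<^sub>M \<pi>) (\<lambda>q. (fst (fst q) \<bullet> fst (snd q)) ^ p)"
  "integrable (\<pi> \<Otimes>\<^sub>M \<pi>) (\<lambda>q. (fst (fst q) \<bullet> fst (snd q)) ^ (p - 1) * (fst (snd q) \<bullet> (snd (fst q) - fst (fst q))))"
  "integrable (\<pi> \<Otimes>\<^sub>M \<pi>) (\<lambda>q. (fst (fst q) \<bullet> fst (snd q)) ^ (p - 1) * (fst (fst q) \<bullet> (snd (snd q) - fst (snd q))))"
proof -
  define S where "S z = norm (fst z) + norm (snd z)" for z :: "'a \<times> 'a"
  have radius: "norm (fst z) \<le> S z" "norm (snd z) \<le> S z" "norm (snd z - fst z) \<le> S z" for z
    unfolding S_def using norm_triangle_ineq4[of "snd z" "fst z"] by (simp_all add: add.commute)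
  have radius_mult: "norm u * norm v \<le> S x * S y" "norm v * norm u \<le> S x * S y"
    if "norm u \<le> S x" "norm v \<le> S y" for u v :: 'a and x y
    using that mult_mono[OF that] by (auto simp: mult.commute S_def)
  have "\<bar>(snd x \<bullet> snd y) ^ p\<bar> \<le> (S x * S y) ^ p" "\<bar>(fst x \<bullet> fst y) ^ p\<bar> \<le> (S x * S y) ^ p"
    "\<bar>(fst x \<bullet> fst y) ^ (p - 1) * (fst y \<bullet> (snd x - fst x))\<bar> \<le> (S x * S y) ^ p"
    "\<bar>(fst x \<bullet> fst y) ^ (p - 1) * (fst x \<bullet> (snd y - fst y))\<bar> \<le> (S x * S y) ^ p" for x y
    using two_less_p by (intro abs_inner_power_le abs_inner_power_mult_inner_le radius_mult radius; simp)+
  then show "integrable (\<pi> \<Otimes>\<^sub>M \<pi>) (\<lambda>q. (snd (fst q) \<bullet> snd (snd q)) ^ p)"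
    "integrable (\<pi> \<Otimes>\<^sub>M \<pi>) (\<lambda>q. (fst (fst q) \<bullet> fst (snd q)) ^ p)"
    "integrable (\<pi> \<Otimes>\<^sub>M \<pi>) (\<lambda>q. (fst (fst q) \<bullet> fst (snd q)) ^ (p - 1) * (fst (snd q) \<bullet> (snd (fst q) - fst (fst q))))"
    "integrable (\<pi> \<Otimes>\<^sub>M \<pi>) (\<lambda>q. (fst (fst q) \<bullet> fst (snd q)) ^ (p - 1) * (fst (fst q) \<bullet> (snd (snd q) - fst (snd q))))"
    unfolding S_def by (auto intro!: integrable_pair_dominated continuous_intros)
qed

lemma integral_first_order_terms_swap:
  "(\<integral>q. (fst (fst q) \<bullet> fst (snd q)) ^ (p - 1) * (fst (fst q) \<bullet> (snd (snd q) - fst (snd q))) \<partial>(\<pi> \<Otimes>\<^sub>M \<pi>))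
   = (\<integral>q. (fst (fst q) \<bullet> fst (snd q)) ^ (p - 1) * (fst (snd q) \<bullet> (snd (fst q) - fst (fst q))) \<partial>(\<pi> \<Otimes>\<^sub>M \<pi>))"
proof -
  interpret pair_prob_space \<pi> \<pi>
    using pair_prob_space_square[OF prob_\<pi>] .
  show ?thesis
    using integral_product_swap[of "\<lambda>q. (fst (fst q) \<bullet> fst (snd q)) ^ (p - 1) * (fst (snd q) \<bullet> (snd (fst q) - fst (fst q)))"]
      integrable_inner_power_pair(3)
    by (simp add: case_prod_beta' inner_commute)
qed

lemma double_integral_Taylor_remainder_le:
  "\<bar>(\<integral>q. (snd (fst q) \<bullet> snd (snd q)) ^ p \<partial>(\<pi> \<Otimes>\<^sub>M \<pi>)) - (\<integral>q. (fst (fst q) \<bullet> fst (snd q)) ^ p \<partial>(\<pi> \<Otimes>\<^sub>M \<pi>))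
     - 2 * real p * (\<integral>q. (fst (fst q) \<bullet> fst (snd q)) ^ (p - 1) * (fst (snd q) \<bullet> (snd (fst q) - fst (fst q))) \<partial>(\<pi> \<Otimes>\<^sub>M \<pi>))\<bar>
   \<le> 6 * real p ^ 2 * (\<integral>z. norm (snd z - fst z) ^ 2 * (norm (fst z) + norm (snd z)) ^ (p - 2) \<partial>\<pi>)
       * (\<integral>z. (norm (fst z) + norm (snd z)) ^ p \<partial>\<pi>)"
proof -
  interpret pair_prob_space \<pi> \<pi>
    using pair_prob_space_square[OF prob_\<pi>] .
  define A B where "A z = norm (snd z - fst z) ^ 2 * (norm (fst z) + norm (snd z)) ^ (p - 2)"
    and "B z = (norm (fst z) + norm (snd z)) ^ p" for z :: "'a \<times> 'a"
  define a b where "a q = fst (fst q) \<bullet> fst (snd q)" and "b q = snd (fst q) \<bullet> snd (snd q)"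
    for q :: "('a \<times> 'a) \<times> ('a \<times> 'a)"
  define J J' where "J q = a q ^ (p - 1) * (fst (snd q) \<bullet> (snd (fst q) - fst (fst q)))"
    and "J' q = a q ^ (p - 1) * (fst (fst q) \<bullet> (snd (snd q) - fst (snd q)))" for q
  have integrable: "integrable (\<pi> \<Otimes>\<^sub>M \<pi>) (\<lambda>q. b q ^ p)" "integrable (\<pi> \<Otimes>\<^sub>M \<pi>) (\<lambda>q. a q ^ p)"
      "integrable (\<pi> \<Otimes>\<^sub>M \<pi>) J" "integrable (\<pi> \<Otimes>\<^sub>M \<pi>) J'"
    unfolding a_def b_def J_def J'_def by (fact integrable_inner_power_pair)+
  have "integrable \<pi> A" "integrable \<pi> B"
    unfolding A_def B_def by (rule integrable_weighted_square_diff integrable_norm_add_power)+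
  then have AB: "integrable (\<pi> \<Otimes>\<^sub>M \<pi>) (\<lambda>q. A (fst q) * B (snd q))"
      "integrable (\<pi> \<Otimes>\<^sub>M \<pi>) (\<lambda>q. B (fst q) * A (snd q))"
    by (auto intro: integrable_mult_fst_snd[OF prob_\<pi>])
  have "integral\<^sup>L (\<pi> \<Otimes>\<^sub>M \<pi>) J' = integral\<^sup>L (\<pi> \<Otimes>\<^sub>M \<pi>) J"
    unfolding J_def J'_def a_def by (rule integral_first_order_terms_swap)
  then have "(\<integral>q. b q ^ p \<partial>(\<pi> \<Otimes>\<^sub>M \<pi>)) - (\<integral>q. a q ^ p \<partial>(\<pi> \<Otimes>\<^sub>M \<pi>)) - 2 * real p * integral\<^sup>L (\<pi> \<Otimes>\<^sub>M \<pi>) J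
      = (\<integral>q. b q ^ p - a q ^ p - real p * J q - real p * J' q \<partial>(\<pi> \<Otimes>\<^sub>M \<pi>))"
    using integrable by simp
  also have "\<bar>\<dots>\<bar> \<le> (\<integral>q. 3 * real p ^ 2 * (A (fst q) * B (snd q) + B (fst q) * A (snd q)) \<partial>(\<pi> \<Otimes>\<^sub>M \<pi>))"
  proof (rule integral_abs_bound_integral)
    show "integrable (\<pi> \<Otimes>\<^sub>M \<pi>) (\<lambda>q. b q ^ p - a q ^ p - real p * J q - real p * J' q)"
      using integrable by auto
    show "integrable (\<pi> \<Otimes>\<^sub>M \<pi>) (\<lambda>q. 3 * real p ^ 2 * (A (fst q) * B (snd q) + B (fst q) * A (snd q)))"
      using AB by auto
    show "\<bar>b q ^ p - a q ^ p - real p * J q - real p * J' q\<bar>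
        \<le> 3 * real p ^ 2 * (A (fst q) * B (snd q) + B (fst q) * A (snd q))" for q
      using inner_power_Taylor_remainder_le[where x = "fst (fst q)" and x' = "snd (fst q)"
          and y = "fst (snd q)" and y' = "snd (snd q)" and p = p] two_less_p
      unfolding a_def b_def J_def J'_def A_def B_def by (simp add: mult_ac)
  qed
  also have "\<dots> = 6 * real p ^ 2 * integral\<^sup>L \<pi> A * integral\<^sup>L \<pi> B"
    using AB integral_mult_fst_snd[OF prob_\<pi> \<open>integrable \<pi> A\<close> \<open>integrable \<pi> B\<close>]
      integral_mult_fst_snd[OF prob_\<pi> \<open>integrable \<pi> B\<close> \<open>integrable \<pi> A\<close>]
    by simp
  finally show ?thesis
    unfolding A_def B_def a_def b_def J_def .
qed

lemma integral_weighted_square_diff_le: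
  "(\<integral>z. norm (snd z - fst z) ^ 2 * (norm (fst z) + norm (snd z)) ^ (p - 2) \<partial>\<pi>)
     \<le> ((\<integral>z. norm (snd z - fst z) ^ p \<partial>\<pi>) powr (1 / real p)) ^ 2 * (1 + (\<integral>z. (norm (fst z) + norm (snd z)) ^ p \<partial>\<pi>))"
proof (cases "(\<integral>z. norm (snd z - fst z) ^ p \<partial>\<pi>) = 0")
  case True
  then have "AE z in \<pi>. norm (snd z - fst z) ^ p = 0"
    using integrable_norm_diff_power by (subst integral_nonneg_eq_0_iff_AE[symmetric]) auto
  then have "AE z in \<pi>. norm (snd z - fst z) ^ 2 * (norm (fst z) + norm (snd z)) ^ (p - 2) = 0"
    by auto
  then have "(\<integral>z. norm (snd z - fst z) ^ 2 * (norm (fst z) + norm (snd z)) ^ (p - 2) \<partial>\<pi>) = 0"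
    by (rule integral_eq_zero_AE)
  then show ?thesis
    using True by simp
next
  case False
  define H where "H = (\<integral>z. norm (snd z - fst z) ^ p \<partial>\<pi>)"
  define r where "r = H powr (1 / real p)"
  have "0 < H"
    using False integrable_norm_diff_power unfolding H_def by (simp add: integral_nonneg order_less_le)
  then have "0 < r" "r ^ p = H"
    unfolding r_def using two_less_p by (simp_all add: powr_realpow[symmetric] powr_powr)
  have pointwise: "norm (snd z - fst z) ^ 2 * (norm (fst z) + norm (snd z)) ^ (p - 2)
      \<le> r ^ 2 * (norm (snd z - fst z) ^ p / H + (norm (fst z) + norm (snd z)) ^ p)" for z :: "'a \<times> 'a"
  proof -
    have "norm (snd z - fst z) ^ 2 * (norm (fst z) + norm (snd z)) ^ (p - 2)
        = r ^ 2 * ((norm (snd z - fst z) / r) ^ 2 * (norm (fst z) + norm (snd z)) ^ (p - 2))"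
      using \<open>0 < r\<close> by (simp add: power_divide)
    also have "\<dots> \<le> r ^ 2 * ((norm (snd z - fst z) / r) ^ p + (norm (fst z) + norm (snd z)) ^ p)"
      using \<open>0 < r\<close> two_less_p by (intro mult_left_mono power_mult_le_power_add) auto
    finally show ?thesis
      by (simp add: power_divide \<open>r ^ p = H\<close>)
  qed
  have "(\<integral>z. norm (snd z - fst z) ^ 2 * (norm (fst z) + norm (snd z)) ^ (p - 2) \<partial>\<pi>)
      \<le> (\<integral>z. r ^ 2 * (norm (snd z - fst z) ^ p / H + (norm (fst z) + norm (snd z)) ^ p) \<partial>\<pi>)"
    using pointwise integrable_weighted_square_diff integrable_norm_diff_power integrable_norm_add_power
    by (intro integral_mono) auto
  also have "\<dots> = r ^ 2 * (1 + (\<integral>z. (norm (fst z) + norm (snd z)) ^ p \<partial>\<pi>))"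
    using integrable_norm_diff_power integrable_norm_add_power \<open>0 < H\<close> unfolding H_def by simp
  finally show ?thesis
    unfolding r_def H_def .
qed

lemma integral_norm_add_power_le:
  "(\<integral>z. (norm (fst z) + norm (snd z)) ^ p \<partial>\<pi>)
     \<le> 4 ^ p * (\<integral>z. norm (fst z) ^ p \<partial>\<pi>) + 2 ^ p * (\<integral>z. norm (snd z - fst z) ^ p \<partial>\<pi>)"
proof -
  have pointwise: "(norm (fst z) + norm (snd z)) ^ p \<le> 4 ^ p * norm (fst z) ^ p + 2 ^ p * norm (snd z - fst z) ^ p"
    for z :: "'a \<times> 'a"
  proof -
    have "norm (snd z) \<le> norm (fst z) + norm (snd z - fst z)"
      using norm_triangle_ineq[of "fst z" "snd z - fst z"] by simp
    then have "(norm (fst z) + norm (snd z)) ^ p \<le> (2 * norm (fst z) + norm (snd z - fst z)) ^ p"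
      by (intro power_mono) auto
    also have "\<dots> \<le> 2 ^ p * ((2 * norm (fst z)) ^ p + norm (snd z - fst z) ^ p)"
      by (rule power_add_le_two_power) auto
    also have "\<dots> = 4 ^ p * norm (fst z) ^ p + 2 ^ p * norm (snd z - fst z) ^ p"
      by (simp add: power_mult_distrib algebra_simps flip: power_mult_distrib[of 2 2])
    finally show ?thesis .
  qed
  have "(\<integral>z. (norm (fst z) + norm (snd z)) ^ p \<partial>\<pi>)
      \<le> (\<integral>z. 4 ^ p * norm (fst z) ^ p + 2 ^ p * norm (snd z - fst z) ^ p \<partial>\<pi>)"
    using pointwise integrable_norm_add_power moment_fst integrable_norm_diff_power
    by (intro integral_mono) auto
  also have "\<dots> = 4 ^ p * (\<integral>z. norm (fst z) ^ p \<partial>\<pi>) + 2 ^ p * (\<integral>z. norm (snd z - fst z) ^ p \<partial>\<pi>)"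
    using moment_fst integrable_norm_diff_power by simp
  finally show ?thesis .
qed

lemma double_integral_Taylor_remainder_le_modulus:
  "\<bar>(\<integral>q. (snd (fst q) \<bullet> snd (snd q)) ^ p \<partial>(\<pi> \<Otimes>\<^sub>M \<pi>)) - (\<integral>q. (fst (fst q) \<bullet> fst (snd q)) ^ p \<partial>(\<pi> \<Otimes>\<^sub>M \<pi>))
     - 2 * real p * (\<integral>q. (fst (fst q) \<bullet> fst (snd q)) ^ (p - 1) * (fst (snd q) \<bullet> (snd (fst q) - fst (fst q))) \<partial>(\<pi> \<Otimes>\<^sub>M \<pi>))\<bar>
   \<le> PFP_modulus p (\<integral>z. norm (fst z) ^ p \<partial>\<pi>) ((\<integral>z. norm (snd z - fst z) ^ p \<partial>\<pi>) powr (1 / real p))"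
proof -
  define m H E where "m = (\<integral>z. norm (fst z) ^ p \<partial>\<pi>)" and "H = (\<integral>z. norm (snd z - fst z) ^ p \<partial>\<pi>)"
    and "E = (\<integral>z. (norm (fst z) + norm (snd z)) ^ p \<partial>\<pi>)"
  define r where "r = H powr (1 / real p)"
  have "0 \<le> E" "0 \<le> H"
    unfolding E_def H_def by (auto intro: integral_nonneg)
  then have "r ^ p = H"
    unfolding r_def using two_less_p by (simp add: powr_realpow'[symmetric] powr_powr)
  then have E_le: "E \<le> 4 ^ p * m + 2 ^ p * r ^ p"
    unfolding E_def m_def H_def by (simp add: integral_norm_add_power_le)
  have "6 * real p ^ 2 * (\<integral>z. norm (snd z - fst z) ^ 2 * (norm (fst z) + norm (snd z)) ^ (p - 2) \<partial>\<pi>) * E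
      \<le> 6 * real p ^ 2 * (r ^ 2 * (1 + E)) * E"
    using \<open>0 \<le> E\<close> integral_weighted_square_diff_le
    unfolding r_def H_def E_def by (intro mult_right_mono mult_left_mono) auto
  also have "\<dots> \<le> PFP_modulus p m r"
    unfolding PFP_modulus_def using \<open>0 \<le> E\<close> E_le
    by (simp add: mult.assoc) (intro mult_left_mono mult_mono; simp)
  finally show ?thesis
    using double_integral_Taylor_remainder_le unfolding E_def r_def H_def m_def by linarith
qed

end

lemma integral_gPFP_coupling:
  fixes \<pi> :: "('a::euclidean_space \<times> 'a) measure"
  assumes "prob_space \<pi>" "sets \<pi> = sets borel" "distr \<pi> borel fst = \<mu>"
    and "integrable \<mu> (\<lambda>u. norm u ^ p)" "0 < p"
    and "integrable (\<pi> \<Otimes>\<^sub>M \<pi>)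
           (\<lambda>q. (fst (fst q) \<bullet> fst (snd q)) ^ (p - 1) * (fst (snd q) \<bullet> (snd (fst q) - fst (fst q))))"
  shows "(\<integral>z. gPFP p \<mu> (fst z) \<bullet> (snd z - fst z) \<partial>\<pi>)
     = 2 * real p * (\<integral>q. (fst (fst q) \<bullet> fst (snd q)) ^ (p - 1) * (fst (snd q) \<bullet> (snd (fst q) - fst (fst q))) \<partial>(\<pi> \<Otimes>\<^sub>M \<pi>))"
proof -
  interpret pair_prob_space \<pi> \<pi>
    using pair_prob_space_square[OF assms(1)] .
  have fst_measurable: "fst \<in> borel_measurable \<pi>"
    using assms(2) by (intro borel_measurable_continuous_on_sets continuous_intros)
  have "sets \<mu> = sets borel"
    using assms(3) by auto
  have "gPFP p \<mu> (fst z) \<bullet> (snd z - fst z)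
      = 2 * real p * (\<integral>w. (fst z \<bullet> fst w) ^ (p - 1) * (fst w \<bullet> (snd z - fst z)) \<partial>\<pi>)" for z
  proof -
    have "(\<integral>u. (fst z \<bullet> u) ^ (p - 1) * (u \<bullet> (snd z - fst z)) \<partial>\<mu>)
        = (\<integral>w. (fst z \<bullet> fst w) ^ (p - 1) * (fst w \<bullet> (snd z - fst z)) \<partial>\<pi>)"
      unfolding assms(3)[symmetric]
      by (rule integral_distr[OF fst_measurable]) (intro borel_measurable_continuous_onI continuous_intros)
    then show ?thesis
      by (simp add: inner_gPFP[OF \<open>sets \<mu> = sets borel\<close> assms(4,5)])
  qed
  then have "(\<integral>z. gPFP p \<mu> (fst z) \<bullet> (snd z - fst z) \<partial>\<pi>)
      = 2 * real p * (\<integral>z. (\<integral>w. (fst z \<bullet> fst w) ^ (p - 1) * (fst w \<bullet> (snd z - fst z)) \<partial>\<pi>) \<partial>\<pi>)"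
    by simp
  also have "\<dots> = 2 * real p * (\<integral>q. (fst (fst q) \<bullet> fst (snd q)) ^ (p - 1) * (fst (snd q) \<bullet> (snd (fst q) - fst (fst q))) \<partial>(\<pi> \<Otimes>\<^sub>M \<pi>))"
    using integral_fst'[OF assms(6)] by simp
  finally show ?thesis .
qed

theorem PFP_coupling_expansion_le:
  fixes \<pi> :: "('a::euclidean_space \<times> 'a) measure"
  assumes "2 < p" "even p" "borel_prob \<pi>" "\<mu> \<in> Pp (real p)" "\<nu> \<in> Pp (real p)"
    and marginals: "distr \<pi> borel fst = \<mu>" "distr \<pi> borel snd = \<nu>"
  shows "\<bar>PFP p \<nu> - PFP p \<mu> - (\<integral>z. gPFP p \<mu> (fst z) \<bullet> (snd z - fst z) \<partial>\<pi>)\<bar>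
     \<le> PFP_modulus p (\<integral>x. norm x ^ p \<partial>\<mu>) ((\<integral>z. norm (snd z - fst z) ^ p \<partial>\<pi>) powr (1 / real p))"
proof -
  have \<pi>: "prob_space \<pi>" "sets \<pi> = sets borel"
    using assms(3) unfolding borel_prob_def by auto
  have [measurable]: "fst \<in> borel_measurable \<pi>" "snd \<in> borel_measurable \<pi>"
    using \<pi>(2) by (auto intro!: borel_measurable_continuous_on_sets continuous_intros)
  have [measurable]: "(\<lambda>x. norm x ^ p) \<in> borel_measurable (borel :: 'a measure)"
    by (intro borel_measurable_continuous_onI continuous_intros)
  have moments: "integrable \<pi> (\<lambda>z. norm (fst z) ^ p)" "integrable \<pi> (\<lambda>z. norm (snd z) ^ p)"
    using Pp_integrable_norm_power[OF assms(4)] Pp_integrable_norm_power[OF assms(5)] assms(1)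
    unfolding marginals[symmetric] by (simp_all add: integrable_distr_eq)
  have "(\<integral>z. norm (fst z) ^ p \<partial>\<pi>) = (\<integral>x. norm x ^ p \<partial>\<mu>)"
    unfolding marginals(1)[symmetric] by (simp add: integral_distr)
  note pair_terms = integrable_inner_power_pair[OF assms(1) \<pi> moments]
  have "PFP p \<nu> = (\<integral>q. (snd (fst q) \<bullet> snd (snd q)) ^ p \<partial>(\<pi> \<Otimes>\<^sub>M \<pi>))"
    unfolding marginals(2)[symmetric] by (rule PFP_distr[OF \<pi>(1) _ assms(2) pair_terms(1)]) measurable
  moreover have "PFP p \<mu> = (\<integral>q. (fst (fst q) \<bullet> fst (snd q)) ^ p \<partial>(\<pi> \<Otimes>\<^sub>M \<pi>))"
    unfolding marginals(1)[symmetric] by (rule PFP_distr[OF \<pi>(1) _ assms(2) pair_terms(2)]) measurable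
  moreover have "(\<integral>z. gPFP p \<mu> (fst z) \<bullet> (snd z - fst z) \<partial>\<pi>)
      = 2 * real p * (\<integral>q. (fst (fst q) \<bullet> fst (snd q)) ^ (p - 1) * (fst (snd q) \<bullet> (snd (fst q) - fst (fst q))) \<partial>(\<pi> \<Otimes>\<^sub>M \<pi>))"
    using assms(1) by (intro integral_gPFP_coupling[OF \<pi> marginals(1) _ _ pair_terms(3)] Pp_integrable_norm_power[OF assms(4)]) auto
  ultimately show ?thesis
    using double_integral_Taylor_remainder_le_modulus[OF assms(1) \<pi> moments]
      \<open>(\<integral>z. norm (fst z) ^ p \<partial>\<pi>) = (\<integral>x. norm x ^ p \<partial>\<mu>)\<close> by simp
qed

section \<open>Strong differentiability\<close>

lemma Cpb_eq_integral_distr: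
  fixes \<beta> :: "('a::euclidean_space \<times> 'a \<times> 'a) measure"
  assumes "sets \<beta> = sets borel" "0 < p"
  shows "Cpb (real p) \<beta>
    = (\<integral>z. norm (snd z - fst z) ^ p \<partial>distr \<beta> borel (\<lambda>z. (fst z, snd (snd z)))) powr (1 / real p)"
proof -
  have [measurable]: "(\<lambda>z. (fst z, snd (snd z))) \<in> measurable \<beta> (borel :: ('a \<times> 'a) measure)"
    using assms(1) by (intro borel_measurable_continuous_on_sets continuous_intros)
  have "enn2real (\<integral>\<^sup>+ z. ennreal (norm (fst z - snd (snd z)) powr real p) \<partial>\<beta>)
      = (\<integral>z. norm (snd (snd z) - fst z) ^ p \<partial>\<beta>)"
  proof (rule enn2real_nn_integral_eq_integral)
    show "(\<lambda>z. norm (snd (snd z) - fst z) ^ p) \<in> borel_measurable \<beta>"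
      using assms(1) by (intro borel_measurable_continuous_on_sets continuous_intros)
  qed (use assms(2) in \<open>auto simp: norm_minus_commute powr_realpow'\<close>)
  also have "\<dots> = (\<integral>z. norm (snd z - fst z) ^ p \<partial>distr \<beta> borel (\<lambda>z. (fst z, snd (snd z))))"
    by (subst integral_distr) (auto intro!: borel_measurable_continuous_onI continuous_intros)
  finally show ?thesis
    unfolding Cpb_def by simp
qed

lemma Gamma_set_graph_plan_AE:
  fixes \<beta> :: "('a::euclidean_space \<times> 'a \<times> 'a) measure"
  assumes "\<beta> \<in> Gamma_set (distr \<mu> borel (\<lambda>x. (x, gPFP p \<mu> x))) \<nu>" "prob_space \<mu>" "sets \<mu> = sets borel"
  shows "AE z in \<beta>. fst (snd z) = gPFP p \<mu> (fst z)"
proof -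
  have "sets \<beta> = sets borel"
    and plan: "distr \<beta> borel (\<lambda>z. (fst z, fst (snd z))) = distr \<mu> borel (\<lambda>x. (x, gPFP p \<mu> x))"
    using assms(1) unfolding Gamma_set_def borel_prob_def by (auto simp: case_prod_beta')
  note borel_measurable_gPFP[OF assms(2,3), measurable]
  have [measurable]: "fst \<in> borel_measurable (borel :: ('a \<times> 'a) measure)"
    "snd \<in> borel_measurable (borel :: ('a \<times> 'a) measure)"
    by (auto intro!: borel_measurable_continuous_onI continuous_intros)
  have graph: "(\<lambda>x. (x, gPFP p \<mu> x)) \<in> measurable \<mu> borel"
    unfolding measurable_cong_sets[OF assms(3) refl] by measurable
  have project: "(\<lambda>z. (fst z, fst (snd z))) \<in> measurable \<beta> borel"
    using \<open>sets \<beta> = sets borel\<close> by (auto intro!: borel_measurable_continuous_on_sets continuous_intros)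
  have "AE q in distr \<mu> borel (\<lambda>x. (x, gPFP p \<mu> x)). snd q = gPFP p \<mu> (fst q)"
    by (subst AE_distr_iff[OF graph]) simp_all
  then show ?thesis
    unfolding plan[symmetric] by (subst (asm) AE_distr_iff[OF project]) simp_all
qed

lemma Gamma_set_graph_plan_coupling:
  fixes \<beta> :: "('a::euclidean_space \<times> 'a \<times> 'a) measure"
  assumes "\<beta> \<in> Gamma_set (distr \<mu> borel (\<lambda>x. (x, gPFP p \<mu> x))) \<nu>" "prob_space \<mu>" "sets \<mu> = sets borel"
  defines "\<pi> \<equiv> distr \<beta> borel (\<lambda>z. (fst z, snd (snd z)))"
  shows "borel_prob \<pi>" "distr \<pi> borel fst = \<mu>" "distr \<pi> borel snd = \<nu>"
    and "(\<integral>z. fst (snd z) \<bullet> (snd (snd z) - fst z) \<partial>\<beta>) = (\<integral>z. gPFP p \<mu> (fst z) \<bullet> (snd z - fst z) \<partial>\<pi>)"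
proof -
  have \<beta>: "prob_space \<beta>" "sets \<beta> = sets borel"
    and plan: "distr \<beta> borel (\<lambda>z. (fst z, fst (snd z))) = distr \<mu> borel (\<lambda>x. (x, gPFP p \<mu> x))"
    and target: "distr \<beta> borel (\<lambda>z. snd (snd z)) = \<nu>"
    using assms(1) unfolding Gamma_set_def borel_prob_def by (auto simp: case_prod_beta')
  note borel_measurable_gPFP[OF assms(2,3), measurable]
  have [measurable]: "fst \<in> borel_measurable \<beta>" "(\<lambda>z. snd (snd z)) \<in> borel_measurable \<beta>"
    "fst \<in> borel_measurable (borel :: ('a \<times> 'a) measure)" "snd \<in> borel_measurable (borel :: ('a \<times> 'a) measure)"
    using \<beta>(2) by (auto intro!: borel_measurable_continuous_on_sets borel_measurable_continuous_onI continuous_intros)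
  have graph: "(\<lambda>x. (x, gPFP p \<mu> x)) \<in> measurable \<mu> borel"
    unfolding measurable_cong_sets[OF assms(3) refl] by measurable
  have project: "(\<lambda>z. (fst z, fst (snd z))) \<in> measurable \<beta> borel" "(\<lambda>z. (fst z, snd (snd z))) \<in> measurable \<beta> borel"
    using \<beta>(2) by (auto intro!: borel_measurable_continuous_on_sets continuous_intros)
  show "borel_prob \<pi>"
    unfolding borel_prob_def \<pi>_def using prob_space.prob_space_distr[OF \<beta>(1) project(2)] by simp
  have "distr \<pi> borel fst = distr (distr \<beta> borel (\<lambda>z. (fst z, fst (snd z)))) borel fst"
    unfolding \<pi>_def by (simp add: distr_distr[OF _ project(2)] distr_distr[OF _ project(1)] comp_def)
  also have "\<dots> = \<mu>"
    unfolding plan by (subst distr_distr[OF _ graph]) (simp_all add: comp_def distr_id2[OF assms(3)[symmetric]])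
  finally show "distr \<pi> borel fst = \<mu>" .
  show "distr \<pi> borel snd = \<nu>"
    unfolding \<pi>_def target[symmetric] by (subst distr_distr[OF _ project(2)]) (simp_all add: comp_def)
  have "(\<integral>z. fst (snd z) \<bullet> (snd (snd z) - fst z) \<partial>\<beta>) = (\<integral>z. gPFP p \<mu> (fst z) \<bullet> (snd (snd z) - fst z) \<partial>\<beta>)"
    using Gamma_set_graph_plan_AE[OF assms(1-3)] \<beta>(2)
    by (intro integral_cong_AE) (auto intro!: borel_measurable_continuous_on_sets continuous_intros)
  also have "\<dots> = (\<integral>z. gPFP p \<mu> (fst z) \<bullet> (snd z - fst z) \<partial>\<pi>)"
    unfolding \<pi>_def by (subst integral_distr[OF project(2)]) simp_all
  finally show "(\<integral>z. fst (snd z) \<bullet> (snd (snd z) - fst z) \<partial>\<beta>) = (\<integral>z. gPFP p \<mu> (fst z) \<bullet> (snd z - fst z) \<partial>\<pi>)" .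
qed

theorem mainTheorem12:
  fixes p :: nat and \<mu> :: "'a::euclidean_space measure"
  assumes "even p" and "p > 2"
    and "\<mu> \<in> Pp (real p)"
  shows "strongly_differentiable (real p) (PFP p) \<mu>
           (distr \<mu> borel (\<lambda>x. (x, gPFP p \<mu> x)))"
proof -
  have \<mu>: "prob_space \<mu>" "sets \<mu> = sets borel"
    using assms(3) unfolding Pp_def by auto
  have "\<bar>PFP p \<nu> - PFP p \<mu> - (\<integral>z. fst (snd z) \<bullet> (snd (snd z) - fst z) \<partial>\<beta>)\<bar>
      \<le> PFP_modulus p (\<integral>x. norm x ^ p \<partial>\<mu>) (Cpb (real p) \<beta>)"
    if "\<nu> \<in> Pp (real p)" "\<beta> \<in> Gamma_set (distr \<mu> borel (\<lambda>x. (x, gPFP p \<mu> x))) \<nu>" for \<nu> \<beta>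
  proof -
    note \<pi> = Gamma_set_graph_plan_coupling[OF that(2) \<mu>]
    have "sets \<beta> = sets borel"
      using that(2) unfolding Gamma_set_def borel_prob_def by auto
    then show ?thesis
      using PFP_coupling_expansion_le[OF assms(2,1) \<pi>(1) assms(3) that(1) \<pi>(2,3)] \<pi>(4)
        Cpb_eq_integral_distr[of \<beta> p] assms(2) by simp
  qed
  moreover have "1 < p"
    using assms(2) by linarith
  ultimately show ?thesis
    unfolding strongly_differentiable_def
    using graph_plan_gPFP[OF assms(3)] PFP_modulus_tendsto by blast
qed

end
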